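(* Let $(X,d)$ be a bounded metric space, let $S(X)$ be its Samuel compactification with compact topology $\tau$, and define on $S(X)$ the metric $\partial(a,b)=\sup\{|f(a)-f(b)| : f\in\mathrm{Lip}_1(X)\}$. Then every $\tau$-convergent sequence in $S(X)$ is $\partial$-convergent.
   Context: $S(X)$ is the compactification of $X$ associated with the algebra of bounded uniformly continuous real functions on $(X,d)$: it is a compact Hausdorff space containing a dense image of $X$ such that every bounded uniformly continuous $f\colon X\to\mathbb R$ extends uniquely to a continuous function on $S(X)$ (concretely, the closure of the image of $X$ in $\prod_f \overline{f(X)}$ under $x\mapsto (f(x))_f$). $\mathrm{Lip}_1(X)$ is the set of bounded $1$-Lipschitz functions $X\to\mathbb R$, each identified with its continuous extension to $S(X)$. The triple $(S(X),\tau,\partial)$ is a compact topometric space: the $\partial$-topology refines $\tau$ and $\partial$ is $\tau$-lower semicontinuous. *)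

theory Defs
  imports "HOL-Analysis.Analysis"
begin

text \<open>Bounded uniformly continuous real functions on X (normalised to 0 outside X,
  so that each function on X is represented exactly once).\<close>
definition BUC :: "'a::metric_space set \<Rightarrow> ('a \<Rightarrow> real) set" where
  "BUC X = {f. bounded (f ` X) \<and> uniformly_continuous_on X f \<and> (\<forall>x. x \<notin> X \<longrightarrow> f x = 0)}"

definition Lip1 :: "'a::metric_space set \<Rightarrow> ('a \<Rightarrow> real) set" where
  "Lip1 X = {f \<in> BUC X. \<forall>x\<in>X. \<forall>y\<in>X. \<bar>f x - f y\<bar> \<le> dist x y}"

definition samuel_ambient :: "'a::metric_space set \<Rightarrow> (('a \<Rightarrow> real) \<Rightarrow> real) topology" where
  "samuel_ambient X = product_topology (\<lambda>f. subtopology euclideanreal (closure (f ` X))) (BUC X)"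

definition samuel_embed :: "'a::metric_space set \<Rightarrow> 'a \<Rightarrow> (('a \<Rightarrow> real) \<Rightarrow> real)" where
  "samuel_embed X x = restrict (\<lambda>f. f x) (BUC X)"

definition samuel_top :: "'a::metric_space set \<Rightarrow> (('a \<Rightarrow> real) \<Rightarrow> real) topology" where
  "samuel_top X = subtopology (samuel_ambient X) (samuel_ambient X closure_of (samuel_embed X ` X))"

text \<open>The continuous extension of f \<in> BUC X to S(X) is the coordinate projection at f;
  \<partial>(a,b) = sup over Lip1 X of |f(a) - f(b)|.\<close>
definition samuel_dist :: "'a::metric_space set \<Rightarrow> (('a \<Rightarrow> real) \<Rightarrow> real) \<Rightarrow> (('a \<Rightarrow> real) \<Rightarrow> real) \<Rightarrow> real" where
  "samuel_dist X a b = (SUP f \<in> Lip1 X. \<bar>a f - b f\<bar>)"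

end

theory Submission
  imports Defs
begin

text \<open>Convergence in \<open>\<tau>\<close> is pointwise convergence on the bounded uniformly continuous functions;
  we show it is even uniform on \<open>Lip\<^sub>1(X)\<close>. Otherwise there are \<open>\<epsilon> > 0\<close>, a subsequence \<open>\<sigma> (r j)\<close>
  and \<open>f\<^sub>j \<in> Lip\<^sub>1(X)\<close> with \<open>|\<sigma> (r j) f\<^sub>j - a f\<^sub>j| > \<epsilon>\<close>, the subsequence so sparse that \<open>\<sigma> (r j) f\<^sub>i\<close>
  is already close to \<open>a f\<^sub>i\<close> for all \<open>i < j\<close>. The traces on \<open>X\<close> of small basic neighbourhoods of
  the points \<open>\<sigma> (r j)\<close>, taken with respect to \<open>f\<^sub>0, \<dots>, f\<^sub>j\<close>, are then uniformly separated: the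
  1-Lipschitz function \<open>f\<^sub>i\<close> is close to \<open>\<sigma> (r i) f\<^sub>i\<close> on the \<open>i\<close>-th trace and close to \<open>a f\<^sub>i\<close> on
  all later ones. A truncated distance to the union of the odd-indexed traces is then uniformly
  continuous and alternates between two values along the subsequence, contradicting
  \<open>\<tau>\<close>-convergence.\<close>

lemma frequently_subseq_eventually:
  assumes P: "\<exists>\<^sub>F n in sequentially. P n" and Q: "\<And>k. \<forall>\<^sub>F n in sequentially. Q k n"
  obtains r :: "nat \<Rightarrow> nat" where "strict_mono r" "\<And>j. P (r j)" "\<And>i j. i < j \<Longrightarrow> Q (r i) (r j)"
proof -
  have step: "\<exists>m. P m \<and> n < m \<and> (\<forall>k\<le>n. Q k m)" for n
  proof -
    have "\<forall>\<^sub>F m in sequentially. n < m" by (rule eventually_gt_at_top)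
    moreover have "\<forall>\<^sub>F m in sequentially. \<forall>k\<in>{..n}. Q k m"
      using Q by (simp add: eventually_ball_finite)
    ultimately have "\<forall>\<^sub>F m in sequentially. n < m \<and> (\<forall>k\<in>{..n}. Q k m)"
      by (rule eventually_conj)
    from frequently_ex[OF frequently_eventually_frequently[OF P this]] show ?thesis
      by auto
  qed
  have "\<exists>r. \<forall>j. P (r j) \<and> r j < r (Suc j) \<and> (\<forall>k\<le>r j. Q k (r (Suc j)))"
    by (rule dependent_nat_choice) (use frequently_ex[OF P] step in auto)
  then obtain r where r: "\<And>j. P (r j)" "\<And>j. r j < r (Suc j)" "\<And>j k. k \<le> r j \<Longrightarrow> Q k (r (Suc j))"
    by blast
  have mono: "strict_mono r" by (rule strict_monoI_Suc) (rule r(2))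
  have "Q (r i) (r j)" if "i < j" for i j
  proof -
    obtain j' where "j = Suc j'" "i \<le> j'" using \<open>i < j\<close> by (cases j) auto
    then show ?thesis using r(3) strict_mono_less_eq[OF mono] by simp
  qed
  from mono r(1) this show ?thesis by (rule that)
qed

lemma Lip1I:
  assumes "bounded (f ` X)" and Lip: "\<And>x y. x \<in> X \<Longrightarrow> y \<in> X \<Longrightarrow> \<bar>f x - f y\<bar> \<le> dist x y"
    and "\<And>x. x \<notin> X \<Longrightarrow> f x = 0"
  shows "f \<in> Lip1 X"
proof -
  have "uniformly_continuous_on X f"
    unfolding uniformly_continuous_on_def
  proof (intro allI impI)
    fix e :: real assume "e > 0"
    have "dist (f y) (f x) < e" if "x \<in> X" "y \<in> X" "dist y x < e" for x y
      using Lip[OF that(2,1)] that(3) by (simp add: dist_real_def)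
    with \<open>e > 0\<close> show "\<exists>d>0. \<forall>x\<in>X. \<forall>y\<in>X. dist y x < d \<longrightarrow> dist (f y) (f x) < e"
      by blast
  qed
  with assms show ?thesis by (simp add: Lip1_def BUC_def)
qed

lemma Lip1_subset_BUC: "Lip1 X \<subseteq> BUC X"
  by (auto simp: Lip1_def)

lemma zero_in_Lip1: "(\<lambda>_. 0) \<in> Lip1 X"
proof (rule Lip1I)
  show "bounded ((\<lambda>_. 0::real) ` X)" by (rule bounded_subset[of "{0}"]) auto
qed auto

lemma truncated_infdist_in_Lip1:
  assumes "c \<ge> 0"
  shows "(\<lambda>x. if x \<in> X then min (infdist x S) c else 0) \<in> Lip1 X"
proof (rule Lip1I)
  show "bounded ((\<lambda>x. if x \<in> X then min (infdist x S) c else 0) ` X)"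
    unfolding bounded_iff using assms by (intro exI[of _ c]) (auto simp: infdist_nonneg)
  fix x y assume "x \<in> X" "y \<in> X"
  have "\<bar>min (infdist x S) c - min (infdist y S) c\<bar> \<le> \<bar>infdist x S - infdist y S\<bar>"
    by linarith
  also have "\<dots> \<le> dist x y" by (rule infdist_triangle_abs)
  finally show "\<bar>(if x \<in> X then min (infdist x S) c else 0) - (if y \<in> X then min (infdist y S) c else 0)\<bar>
      \<le> dist x y" using \<open>x \<in> X\<close> \<open>y \<in> X\<close> by simp
qed simp

definition samuel_trace_nbhd ::
    "'a::metric_space set \<Rightarrow> (('a \<Rightarrow> real) \<Rightarrow> real) \<Rightarrow> ('a \<Rightarrow> real) set \<Rightarrow> real \<Rightarrow> 'a set" where
  "samuel_trace_nbhd X p G \<delta> = {x \<in> X. \<forall>f\<in>G. \<bar>f x - p f\<bar> < \<delta>}"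

lemma samuel_trace_nbhd_nonempty:
  assumes p: "p \<in> topspace (samuel_top X)" and G: "finite G" "G \<subseteq> BUC X" and "\<delta> > 0"
  shows "samuel_trace_nbhd X p G \<delta> \<noteq> {}"
proof -
  let ?T = "samuel_ambient X"
  let ?U = "\<lambda>f. {q \<in> topspace ?T. q f \<in> ball (p f) \<delta>}"
  have p_closure: "p \<in> ?T closure_of (samuel_embed X ` X)"
    using p by (simp add: samuel_top_def)
  have "openin ?T (?U f)" if "f \<in> G" for f
  proof (rule openin_continuous_map_preimage)
    have "continuous_map ?T (subtopology euclideanreal (closure (f ` X))) (\<lambda>q. q f)"
      unfolding samuel_ambient_def using that G by (intro continuous_map_product_projection) auto
    then show "continuous_map ?T euclideanreal (\<lambda>q. q f)"
      by (simp add: continuous_map_in_subtopology)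
  qed simp
  then have "openin ?T (\<Inter>(insert (topspace ?T) (?U ` G)))"
    using G by (intro openin_Inter) auto
  moreover have "p \<in> \<Inter>(insert (topspace ?T) (?U ` G))"
    using p_closure \<open>\<delta> > 0\<close> by (auto simp: in_closure_of)
  ultimately obtain x where x: "x \<in> X" "samuel_embed X x \<in> \<Inter>(insert (topspace ?T) (?U ` G))"
    using p_closure unfolding in_closure_of by blast
  have "\<bar>f x - p f\<bar> < \<delta>" if "f \<in> G" for f
  proof -
    have "samuel_embed X x \<in> ?U f" using x(2) that by blast
    moreover have "samuel_embed X x f = f x" using that G by (auto simp: samuel_embed_def)
    ultimately have "dist (p f) (f x) < \<delta>" by simp
    then show ?thesis by (simp add: dist_real_def abs_minus_commute)
  qed
  with x(1) show ?thesis unfolding samuel_trace_nbhd_def by blast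
qed

lemma samuel_trace_nbhd_adherent:
  assumes p: "p \<in> topspace (samuel_top X)" and G: "finite G" "G \<subseteq> BUC X" and "\<delta> > 0"
    and h: "h \<in> BUC X"
  shows "p h \<in> closure (h ` samuel_trace_nbhd X p G \<delta>)"
  unfolding closure_approachable
proof (intro allI impI)
  fix e :: real assume "e > 0"
  then obtain x where "x \<in> samuel_trace_nbhd X p (insert h G) (min e \<delta>)"
    using samuel_trace_nbhd_nonempty[OF p] G h \<open>\<delta> > 0\<close> by fastforce
  then show "\<exists>y\<in>h ` samuel_trace_nbhd X p G \<delta>. dist y (p h) < e"
    by (auto simp: samuel_trace_nbhd_def dist_real_def)
qed

lemma limitin_samuel_top_eval:
  assumes "limitin (samuel_top X) \<sigma> a sequentially" "f \<in> BUC X"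
  shows "(\<lambda>n. \<sigma> n f) \<longlonglongrightarrow> a f"
proof -
  have "limitin (samuel_ambient X) \<sigma> a sequentially"
    using assms(1) by (simp add: samuel_top_def limitin_subtopology)
  then have "limitin (subtopology euclideanreal (closure (f ` X))) (\<lambda>n. \<sigma> n f) (a f) sequentially"
    using assms(2) by (simp add: samuel_ambient_def limitin_componentwise)
  then show ?thesis by (simp add: limitin_subtopology)
qed

lemma samuel_eval_diff_le_diameter:
  assumes X: "bounded X" and p: "p \<in> topspace (samuel_top X)" and q: "q \<in> topspace (samuel_top X)"
    and f: "f \<in> Lip1 X"
  shows "\<bar>p f - q f\<bar> \<le> diameter X"
proof (rule field_le_epsilon)
  fix e :: real assume "e > 0"
  have "{f} \<subseteq> BUC X" using f Lip1_subset_BUC by blast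
  with \<open>e > 0\<close> obtain x y
    where "x \<in> samuel_trace_nbhd X p {f} (e/2)" "y \<in> samuel_trace_nbhd X q {f} (e/2)"
    using samuel_trace_nbhd_nonempty[OF p, of "{f}" "e/2"]
      samuel_trace_nbhd_nonempty[OF q, of "{f}" "e/2"]
    by auto
  then have "x \<in> X" "y \<in> X" "\<bar>f x - p f\<bar> < e/2" "\<bar>f y - q f\<bar> < e/2"
    by (auto simp: samuel_trace_nbhd_def)
  moreover have "\<bar>f x - f y\<bar> \<le> dist x y" using f \<open>x \<in> X\<close> \<open>y \<in> X\<close> by (auto simp: Lip1_def)
  moreover have "dist x y \<le> diameter X" using diameter_bounded_bound[OF X \<open>x \<in> X\<close> \<open>y \<in> X\<close>] .
  ultimately show "\<bar>p f - q f\<bar> \<le> diameter X + e" by linarith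
qed

lemma samuel_dist_nonneg:
  assumes "bounded X" "p \<in> topspace (samuel_top X)" "q \<in> topspace (samuel_top X)"
  shows "0 \<le> samuel_dist X p q"
proof -
  have "bdd_above ((\<lambda>f. \<bar>p f - q f\<bar>) ` Lip1 X)"
    using samuel_eval_diff_le_diameter[OF assms] by (intro bdd_aboveI2) auto
  then show ?thesis
    unfolding samuel_dist_def by (rule order_trans[OF abs_ge_zero cSUP_upper[OF zero_in_Lip1]])
qed

lemma samuel_dist_le:
  assumes "\<And>f. f \<in> Lip1 X \<Longrightarrow> \<bar>p f - q f\<bar> \<le> e"
  shows "samuel_dist X p q \<le> e"
  unfolding samuel_dist_def using zero_in_Lip1 assms by (intro cSUP_least) auto

lemma separated_adherent_not_convergent:
  fixes A :: "nat \<Rightarrow> 'a::metric_space set" and p :: "nat \<Rightarrow> ('a \<Rightarrow> real) \<Rightarrow> real"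
  assumes adh: "\<And>j h. h \<in> BUC X \<Longrightarrow> p j h \<in> closure (h ` A j)"
    and A_sub: "\<And>j. A j \<subseteq> X"
    and sep: "\<And>i j x y. i \<noteq> j \<Longrightarrow> x \<in> A i \<Longrightarrow> y \<in> A j \<Longrightarrow> \<epsilon> \<le> dist x y"
    and "\<epsilon> > 0"
  shows "\<exists>g\<in>BUC X. \<not> convergent (\<lambda>j. p j g)"
proof -
  define Odd where "Odd = (\<Union>j\<in>{j. odd j}. A j)"
  define g where "g x = (if x \<in> X then min (infdist x Odd) \<epsilon> else 0)" for x
  have g: "g \<in> BUC X"
    using truncated_infdist_in_Lip1[of \<epsilon> X Odd] \<open>\<epsilon> > 0\<close> Lip1_subset_BUC
    unfolding g_def[abs_def] by auto
  have const: "p j g = c" if "\<And>x. x \<in> A j \<Longrightarrow> g x = c" for j c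
  proof -
    have "p j g \<in> closure (g ` A j)" by (rule adh[OF g])
    also have "\<dots> \<subseteq> closure {c}" using that by (intro closure_mono) auto
    finally show ?thesis by simp
  qed
  have zero: "(\<lambda>_. 0) \<in> BUC X" using zero_in_Lip1 Lip1_subset_BUC by blast
  have "A 1 \<noteq> {}" using adh[OF zero, of 1] by auto
  moreover have "A 1 \<subseteq> Odd" unfolding Odd_def by (rule UN_upper) simp
  ultimately have "Odd \<noteq> {}" by blast
  have p_odd: "p j g = 0" if "odd j" for j
  proof (rule const)
    fix x assume "x \<in> A j"
    then have "x \<in> Odd" using that by (auto simp: Odd_def)
    then show "g x = 0" using \<open>\<epsilon> > 0\<close> by (simp add: g_def)
  qed
  have p_even: "p j g = \<epsilon>" if "even j" for j
  proof (rule const)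
    fix x assume "x \<in> A j"
    have "\<epsilon> \<le> dist x y" if "y \<in> Odd" for y
    proof -
      from that obtain i where "odd i" "y \<in> A i" unfolding Odd_def by blast
      with \<open>even j\<close> have "j \<noteq> i" by auto
      then show ?thesis using sep \<open>x \<in> A j\<close> \<open>y \<in> A i\<close> by blast
    qed
    then have "\<epsilon> \<le> infdist x Odd"
      unfolding infdist_notempty[OF \<open>Odd \<noteq> {}\<close>] by (intro cINF_greatest \<open>Odd \<noteq> {}\<close>)
    then show "g x = \<epsilon>" using A_sub \<open>x \<in> A j\<close> by (auto simp: g_def)
  qed
  have jumps: "\<bar>p (Suc j) g - p j g\<bar> = \<epsilon>" for j
    using p_odd p_even \<open>\<epsilon> > 0\<close> by (cases "even j") auto
  show ?thesis
  proof (intro bexI[OF _ g] notI)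
    assume "convergent (\<lambda>j. p j g)"
    then obtain L where "(\<lambda>j. p j g) \<longlonglongrightarrow> L" by (auto simp: convergent_def)
    then have "(\<lambda>j. \<bar>p (Suc j) g - p j g\<bar>) \<longlonglongrightarrow> \<bar>L - L\<bar>"
      by (intro tendsto_intros LIMSEQ_Suc)
    with jumps \<open>\<epsilon> > 0\<close> show False by (simp add: LIMSEQ_const_iff)
  qed
qed

lemma limitin_samuel_top_uniformly_on_Lip1:
  assumes \<sigma>: "\<And>n. \<sigma> n \<in> topspace (samuel_top X)"
    and lim: "limitin (samuel_top X) \<sigma> a sequentially" and "\<epsilon> > 0"
  shows "\<forall>\<^sub>F n in sequentially. \<forall>f\<in>Lip1 X. \<bar>\<sigma> n f - a f\<bar> \<le> \<epsilon>"
proof (rule ccontr)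
  assume "\<not> ?thesis"
  then have far: "\<exists>\<^sub>F n in sequentially. \<exists>f\<in>Lip1 X. \<epsilon> < \<bar>\<sigma> n f - a f\<bar>"
    by (simp add: not_eventually not_le)
  have "\<forall>n. \<exists>f\<in>Lip1 X. (\<exists>f\<in>Lip1 X. \<epsilon> < \<bar>\<sigma> n f - a f\<bar>) \<longrightarrow> \<epsilon> < \<bar>\<sigma> n f - a f\<bar>"
    using zero_in_Lip1 by blast
  then obtain F where F: "\<And>n. F n \<in> Lip1 X"
    and F_far: "\<And>n. \<exists>f\<in>Lip1 X. \<epsilon> < \<bar>\<sigma> n f - a f\<bar> \<Longrightarrow> \<epsilon> < \<bar>\<sigma> n (F n) - a (F n)\<bar>"
    by metis
  have F_BUC: "F n \<in> BUC X" for n using F Lip1_subset_BUC by blast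
  have "\<exists>\<^sub>F n in sequentially. \<epsilon> < \<bar>\<sigma> n (F n) - a (F n)\<bar>"
    using far by (rule frequently_elim1) (rule F_far)
  moreover have "\<forall>\<^sub>F m in sequentially. \<bar>\<sigma> m (F k) - a (F k)\<bar> < \<epsilon> / 6" for k
    using tendstoD[OF limitin_samuel_top_eval[OF lim F_BUC], of "\<epsilon> / 6"] \<open>\<epsilon> > 0\<close>
    by (simp add: dist_real_def)
  ultimately obtain r :: "nat \<Rightarrow> nat" where r: "strict_mono r"
    and r_far: "\<And>j. \<epsilon> < \<bar>\<sigma> (r j) (F (r j)) - a (F (r j))\<bar>"
    and r_near: "\<And>i j. i < j \<Longrightarrow> \<bar>\<sigma> (r j) (F (r i)) - a (F (r i))\<bar> < \<epsilon> / 6"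
    by (rule frequently_subseq_eventually[where Q = "\<lambda>k m. \<bar>\<sigma> m (F k) - a (F k)\<bar> < \<epsilon> / 6"]) blast
  define A where "A j = samuel_trace_nbhd X (\<sigma> (r j)) (F ` r ` {..j}) (\<epsilon> / 6)" for j
  have A_sub: "A j \<subseteq> X" for j by (auto simp: A_def samuel_trace_nbhd_def)
  have sep: "\<epsilon> / 2 \<le> dist x y" if "i < j" "x \<in> A i" "y \<in> A j" for i j x y
  proof -
    let ?f = "F (r i)"
    have "x \<in> X" "y \<in> X" using A_sub that(2,3) by blast+
    then have Lip: "\<bar>?f x - ?f y\<bar> \<le> dist x y" using F[of "r i"] by (simp add: Lip1_def)
    have "\<bar>?f x - \<sigma> (r i) ?f\<bar> < \<epsilon> / 6" "\<bar>?f y - \<sigma> (r j) ?f\<bar> < \<epsilon> / 6"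
      using that by (auto simp: A_def samuel_trace_nbhd_def)
    with Lip show ?thesis using r_far[of i] r_near[OF \<open>i < j\<close>] by linarith
  qed
  have "\<exists>g\<in>BUC X. \<not> convergent (\<lambda>j. \<sigma> (r j) g)"
  proof (rule separated_adherent_not_convergent)
    show "\<sigma> (r j) h \<in> closure (h ` A j)" if "h \<in> BUC X" for j h
      unfolding A_def using \<sigma> F_BUC \<open>\<epsilon> > 0\<close> that
      by (intro samuel_trace_nbhd_adherent) auto
    show "\<epsilon> / 2 \<le> dist x y" if "i \<noteq> j" "x \<in> A i" "y \<in> A j" for i j x y
      using sep[of i j x y] sep[of j i y x] that by (auto simp: dist_commute neq_iff)
  qed (use A_sub \<open>\<epsilon> > 0\<close> in auto)
  then obtain g where "g \<in> BUC X" "\<not> convergent (\<lambda>j. \<sigma> (r j) g)" by blast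
  moreover have "(\<lambda>j. \<sigma> (r j) g) \<longlonglongrightarrow> a g"
    using LIMSEQ_subseq_LIMSEQ[OF limitin_samuel_top_eval[OF lim \<open>g \<in> BUC X\<close>] r]
    by (simp add: o_def)
  ultimately show False by (auto simp: convergent_def)
qed

theorem mainTheorem20:
  fixes X :: "'a::metric_space set"
    and \<sigma> :: "nat \<Rightarrow> (('a \<Rightarrow> real) \<Rightarrow> real)"
    and a :: "('a \<Rightarrow> real) \<Rightarrow> real"
  assumes "bounded X"
    and "\<And>n. \<sigma> n \<in> topspace (samuel_top X)"
    and "limitin (samuel_top X) \<sigma> a sequentially"
  shows "\<exists>b \<in> topspace (samuel_top X). (\<lambda>n. samuel_dist X (\<sigma> n) b) \<longlonglongrightarrow> 0"
proof
  show a: "a \<in> topspace (samuel_top X)"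
    using assms(3) by (rule limitin_topspace)
  show "(\<lambda>n. samuel_dist X (\<sigma> n) a) \<longlonglongrightarrow> 0"
  proof (rule order_tendstoI)
    fix c :: real assume "c < 0"
    then show "\<forall>\<^sub>F n in sequentially. c < samuel_dist X (\<sigma> n) a"
      using samuel_dist_nonneg[OF assms(1,2) a] by (intro always_eventually) (auto intro: less_le_trans)
  next
    fix c :: real assume "0 < c"
    then have "\<forall>\<^sub>F n in sequentially. \<forall>f\<in>Lip1 X. \<bar>\<sigma> n f - a f\<bar> \<le> c / 2"
      using assms(2,3) by (intro limitin_samuel_top_uniformly_on_Lip1) auto
    then show "\<forall>\<^sub>F n in sequentially. samuel_dist X (\<sigma> n) a < c"
      by eventually_elim (use \<open>0 < c\<close> samuel_dist_le in fastforce)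
  qed
qed

end
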